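(* Let $\xi,\eta\in\mathbb R^3$ and suppose that the triangle formed by $\xi,\xi-\eta,\eta$ is non-degenerate in the sense that one of its three corner angles lies in $[2^{-5},\pi-2^{-5}]$, and that $|\Lambda(\zeta)|\ge2^{-5}$ for some $\zeta\in\{\xi,\xi-\eta,\eta\}$. Then $$|\bar\sigma|\sim\min\{|\xi|,|\xi-\eta|,|\eta|\}\cdot\max\{|\xi|,|\xi-\eta|,|\eta|\},$$ with absolute implicit constants.
   Context: $\Lambda(\zeta)=\zeta_3/|\zeta|$. $\bar\sigma=\xi_3\eta_h-\eta_3\xi_h\in\mathbb R^2$, where $\xi=(\xi_h,\xi_3)$, $\eta=(\eta_h,\eta_3)$. $A\sim B$ means $c^{-1}B\le A\le cB$ for an absolute constant $c$. *)

theory Defs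
  imports "HOL-Analysis.Analysis"
begin

text \<open>Lambda(zeta) = zeta_3 / |zeta| (with the HOL convention x/0 = 0).\<close>
definition Lam :: "real^3 \<Rightarrow> real" where
  "Lam z = z$3 / norm z"

definition sigma_bar :: "real^3 \<Rightarrow> real^3 \<Rightarrow> real^2" where
  "sigma_bar xi eta = vector [xi$3 * eta$1 - eta$3 * xi$1, xi$3 * eta$2 - eta$3 * xi$2]"

definition vec_angle :: "real^3 \<Rightarrow> real^3 \<Rightarrow> real" where
  "vec_angle u v = arccos ((u \<bullet> v) / (norm u * norm v))"

text \<open>The three corner angles of the triangle with vertices 0, eta, xi
  (sides xi, xi - eta, eta).\<close>
definition corner_angles :: "real^3 \<Rightarrow> real^3 \<Rightarrow> real set" where
  "corner_angles xi eta =
     {vec_angle xi eta, vec_angle (-eta) (xi - eta), vec_angle xi (xi - eta)}"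

end

(* Write n = xi \<times> eta. The vector sigma_bar is the horizontal part (n_1, n_2) of n turned by a
   right angle, so |sigma_bar| <= |n|. Any two sides of the triangle have cross product +-n, hence
   |n| = |u| |v| sin(angle u v) at every corner: this gives |n| <= m M, and a corner angle in
   [d, pi - d] gives |n| >= sin d |u| |v| >= sin d m M / 2 by the triangle inequality.
   Finally n is orthogonal to all three sides; if one side z is steep, |z_3| >= d |z|, then n cannot
   be steep: d |n_3| <= |(n_1, n_2)|, so d |n| <= sqrt (1 + d^2) |sigma_bar|. *)

theory Submission
  imports Defs
begin

unbundle cross3_syntax

lemma norm_vec3_squared: "(norm (x :: real^3))\<^sup>2 = (x$1)\<^sup>2 + (x$2)\<^sup>2 + (x$3)\<^sup>2"
  unfolding power2_norm_eq_inner by (simp add: inner_vec_def sum_3 power2_eq_square)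

lemma norm_cross_eq_vec_angle:
  "norm (u \<times> v) = norm u * norm v * sin (vec_angle u v)"
proof (cases "u = 0 \<or> v = 0")
  case True
  then show ?thesis by auto
next
  case False
  define x where "x = (u \<bullet> v) / (norm u * norm v)"
  have uv_pos: "norm u * norm v > 0"
    using False by simp
  have "\<bar>u \<bullet> v\<bar> \<le> norm u * norm v"
    by (rule Cauchy_Schwarz_ineq2)
  then have "\<bar>x\<bar> \<le> 1"
    using uv_pos by (simp add: x_def abs_divide)
  have "(norm (u \<times> v))\<^sup>2 = (norm u * norm v)\<^sup>2 * (1 - x\<^sup>2)"
    using norm_cross_dot[of u v] uv_pos by (simp add: x_def power_divide field_simps)
  then have "norm (u \<times> v) = sqrt ((norm u * norm v)\<^sup>2 * (1 - x\<^sup>2))"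
    by (simp add: real_sqrt_unique)
  also have "\<dots> = norm u * norm v * sin (arccos x)"
    using \<open>\<bar>x\<bar> \<le> 1\<close> uv_pos by (simp add: real_sqrt_mult sin_arccos_abs)
  finally show ?thesis
    by (simp add: vec_angle_def x_def)
qed

lemma norm_cross_le: "norm (u \<times> v) \<le> norm u * norm v"
  using sin_le_one[of "vec_angle u v"] by (simp add: norm_cross_eq_vec_angle mult_left_le)

lemma sin_le_sin_of_between:
  fixes d \<theta> :: real
  assumes "0 \<le> d" "d \<le> \<theta>" "\<theta> \<le> pi - d"
  shows "sin d \<le> sin \<theta>"
proof (cases "\<theta> \<le> pi / 2")
  case True
  then show ?thesis
    using assms by (intro sin_monotone_2pi_le) auto
next
  case False
  have "sin d \<le> sin (pi - \<theta>)"
    using False assms by (intro sin_monotone_2pi_le) auto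
  then show ?thesis by simp
qed

lemma Min_mult_Max_le_two_mult:
  fixes a b c :: real
  assumes "0 \<le> a" "0 \<le> b" "0 \<le> c" "c \<le> a + b"
  shows "Min {a, b, c} * Max {a, b, c} \<le> 2 * (a * b)"
proof -
  have "Min {a, b, c} * Max {a, b, c} \<le> min a b * (a + b)"
    using assms by (intro mult_mono) auto
  also have "\<dots> \<le> 2 * (a * b)"
    using assms by (cases "a \<le> b") (auto simp: min_def algebra_simps intro: mult_mono)
  finally show ?thesis .
qed

lemma Min_mult_Max_mem:
  fixes a b c :: real
  shows "Min {a, b, c} * Max {a, b, c} \<in> {a * b, b * c, c * a}"
  by (auto simp: min_def max_def)

definition side_lengths :: "real^3 \<Rightarrow> real^3 \<Rightarrow> real set" where
  "side_lengths xi eta = {norm xi, norm (xi - eta), norm eta}"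

lemma sin_mult_Min_Max_le_norm_cross:
  assumes "0 \<le> d" "d \<le> vec_angle u v" "vec_angle u v \<le> pi - d"
  shows "sin d * (Min {norm u, norm v, norm (u - v)} * Max {norm u, norm v, norm (u - v)})
           \<le> 2 * norm (u \<times> v)"
proof -
  have sin_d: "0 \<le> sin d"
    using assms by (intro sin_ge_zero) auto
  have "Min {norm u, norm v, norm (u - v)} * Max {norm u, norm v, norm (u - v)}
          \<le> 2 * (norm u * norm v)"
    by (intro Min_mult_Max_le_two_mult norm_triangle_ineq4) auto
  then have "sin d * (Min {norm u, norm v, norm (u - v)} * Max {norm u, norm v, norm (u - v)})
               \<le> 2 * (norm u * norm v) * sin d"
    using sin_d by (subst mult.commute) (rule mult_left_mono)
  also have "\<dots> \<le> 2 * (norm u * norm v) * sin (vec_angle u v)"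
    using assms by (intro mult_left_mono sin_le_sin_of_between) auto
  finally show ?thesis
    by (simp add: norm_cross_eq_vec_angle)
qed

lemma corner_angle_Min_mult_Max_le_norm_cross:
  assumes "\<theta> \<in> corner_angles xi eta" "0 \<le> d" "d \<le> \<theta>" "\<theta> \<le> pi - d"
  shows "sin d * (Min (side_lengths xi eta) * Max (side_lengths xi eta)) \<le> 2 * norm (xi \<times> eta)"
proof -
  have corner: ?thesis
    if "\<theta> = vec_angle u v" "side_lengths xi eta = {norm u, norm v, norm (u - v)}"
      "norm (u \<times> v) = norm (xi \<times> eta)" for u v
    using sin_mult_Min_Max_le_norm_cross[of d u v] that assms(2-4) by simp
  consider "\<theta> = vec_angle xi eta" | "\<theta> = vec_angle (- eta) (xi - eta)" | "\<theta> = vec_angle xi (xi - eta)"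
    using assms(1) unfolding corner_angles_def by blast
  then show ?thesis
  proof cases
    case 1
    then show ?thesis
      by (rule corner) (simp_all add: side_lengths_def insert_commute)
  next
    case 2
    have "(- eta) \<times> (xi - eta) = xi \<times> eta"
      by (simp add: Cross3.right_diff_distrib cross_skew[of eta xi])
    with 2 show ?thesis
      by (intro corner[of "- eta" "xi - eta"]) (simp_all add: side_lengths_def insert_commute)
  next
    case 3
    then show ?thesis
      by (rule corner) (simp_all add: side_lengths_def Cross3.right_diff_distrib)
  qed
qed

lemma norm_cross_le_Min_mult_Max:
  "norm (xi \<times> eta) \<le> Min (side_lengths xi eta) * Max (side_lengths xi eta)"
proof -
  have "norm (xi \<times> eta) \<le> norm xi * norm (xi - eta)"
    using norm_cross_le[of xi "xi - eta"] by (simp add: Cross3.right_diff_distrib)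
  moreover have "norm (xi \<times> eta) \<le> norm (xi - eta) * norm eta"
    using norm_cross_le[of "xi - eta" eta] by (simp add: Cross3.left_diff_distrib)
  moreover have "norm (xi \<times> eta) \<le> norm eta * norm xi"
    using norm_cross_le[of xi eta] by (simp add: mult.commute)
  ultimately show ?thesis
    using Min_mult_Max_mem[of "norm xi" "norm (xi - eta)" "norm eta"]
    by (auto simp: side_lengths_def)
qed

lemma orthogonal_to_steep_vertical_le_horizontal:
  fixes z n :: "real^3"
  assumes "0 < d" "d \<le> \<bar>Lam z\<bar>" "z \<bullet> n = 0"
  shows "d\<^sup>2 * (n$3)\<^sup>2 \<le> (n$1)\<^sup>2 + (n$2)\<^sup>2"
proof -
  have z_pos: "norm z > 0"
    using assms by (auto simp: Lam_def)
  have "d * norm z \<le> \<bar>z$3\<bar>"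
    using assms z_pos by (simp add: Lam_def abs_divide le_divide_eq)
  then have "(d * norm z)\<^sup>2 \<le> (z$3)\<^sup>2"
    using assms by (metis power2_abs power_mono mult_nonneg_nonneg less_imp_le norm_ge_zero)
  then have "(d * norm z)\<^sup>2 * (n$3)\<^sup>2 \<le> (z$3)\<^sup>2 * (n$3)\<^sup>2"
    by (rule mult_right_mono) simp
  then have "d\<^sup>2 * (n$3)\<^sup>2 * (norm z)\<^sup>2 \<le> (z$3 * n$3)\<^sup>2"
    by (simp add: power_mult_distrib algebra_simps)
  also have "z$3 * n$3 = - (z$1 * n$1 + z$2 * n$2)"
    using assms(3) by (simp add: inner_vec_def sum_3 add_eq_0_iff2 algebra_simps)
  also have "(- (z$1 * n$1 + z$2 * n$2))\<^sup>2 \<le> ((n$1)\<^sup>2 + (n$2)\<^sup>2) * ((z$1)\<^sup>2 + (z$2)\<^sup>2)"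
    using zero_le_power2[of "n$1 * z$2 - n$2 * z$1"]
    by (simp add: power2_eq_square algebra_simps)
  also have "\<dots> \<le> ((n$1)\<^sup>2 + (n$2)\<^sup>2) * (norm z)\<^sup>2"
    by (intro mult_left_mono) (simp_all add: norm_vec3_squared)
  finally show ?thesis
    using z_pos by simp
qed

lemma norm_sigma_bar_squared:
  "(norm (sigma_bar xi eta))\<^sup>2 = ((xi \<times> eta)$1)\<^sup>2 + ((xi \<times> eta)$2)\<^sup>2"
  unfolding power2_norm_eq_inner
  by (simp add: sigma_bar_def inner_vec_def sum_2 cross_components power2_eq_square algebra_simps)

lemma norm_sigma_bar_le_norm_cross: "norm (sigma_bar xi eta) \<le> norm (xi \<times> eta)"
  by (rule power2_le_imp_le) (simp_all add: norm_sigma_bar_squared norm_vec3_squared)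

lemma norm_cross_le_norm_sigma_bar:
  assumes "0 < d" "z \<in> {xi, xi - eta, eta}" "d \<le> \<bar>Lam z\<bar>"
  shows "d * norm (xi \<times> eta) \<le> sqrt (1 + d\<^sup>2) * norm (sigma_bar xi eta)"
proof -
  have "z \<bullet> (xi \<times> eta) = 0"
    using assms(2) by (auto simp: dot_cross_self inner_diff_left inner_commute[of eta])
  with assms(1,3) have "d\<^sup>2 * ((xi \<times> eta)$3)\<^sup>2 \<le> ((xi \<times> eta)$1)\<^sup>2 + ((xi \<times> eta)$2)\<^sup>2"
    by (rule orthogonal_to_steep_vertical_le_horizontal)
  then have "(d * norm (xi \<times> eta))\<^sup>2 \<le> (sqrt (1 + d\<^sup>2) * norm (sigma_bar xi eta))\<^sup>2"
    by (simp add: power_mult_distrib norm_vec3_squared norm_sigma_bar_squared algebra_simps)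
  then show ?thesis
    by (rule power2_le_imp_le) simp
qed

lemma norm_sigma_bar_le_Min_mult_Max:
  "norm (sigma_bar xi eta) \<le> Min (side_lengths xi eta) * Max (side_lengths xi eta)"
  using norm_sigma_bar_le_norm_cross norm_cross_le_Min_mult_Max by (rule order_trans)

lemma Min_mult_Max_le_norm_sigma_bar:
  assumes "0 < d" "\<theta> \<in> corner_angles xi eta" "d \<le> \<theta>" "\<theta> \<le> pi - d"
    "z \<in> {xi, xi - eta, eta}" "d \<le> \<bar>Lam z\<bar>"
  shows "d * sin d / (2 * sqrt (1 + d\<^sup>2)) * (Min (side_lengths xi eta) * Max (side_lengths xi eta))
           \<le> norm (sigma_bar xi eta)"
proof -
  have "d * sin d * (Min (side_lengths xi eta) * Max (side_lengths xi eta))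
          \<le> d * (2 * norm (xi \<times> eta))"
    using assms(1-4) corner_angle_Min_mult_Max_le_norm_cross[of \<theta> xi eta d]
    by (simp add: mult.assoc mult_left_mono)
  also have "\<dots> \<le> 2 * sqrt (1 + d\<^sup>2) * norm (sigma_bar xi eta)"
    using norm_cross_le_norm_sigma_bar[OF assms(1,5,6)] by simp
  finally show ?thesis
    by (simp add: pos_divide_le_eq add_pos_nonneg mult.commute)
qed

theorem lemma6p2:
  shows "\<exists>c::real. c > 0 \<and>
    (\<forall>xi eta :: real^3.
       (\<exists>\<theta>\<in>corner_angles xi eta. 2 powr (-5) \<le> \<theta> \<and> \<theta> \<le> pi - 2 powr (-5)) \<and>
       (\<exists>z\<in>{xi, xi - eta, eta}. \<bar>Lam z\<bar> \<ge> 2 powr (-5)) \<longrightarrow>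
       (let m = min (norm xi) (min (norm (xi - eta)) (norm eta));
            M = max (norm xi) (max (norm (xi - eta)) (norm eta))
        in inverse c * (m * M) \<le> norm (sigma_bar xi eta) \<and>
           norm (sigma_bar xi eta) \<le> c * (m * M)))"
proof -
  define d :: real where "d = 2 powr (-5)"
  have d_pos: "0 < d" and d_lt_pi: "d < pi"
    using pi_gt3 by (auto simp: d_def powr_minus divide_simps)
  define \<kappa> where "\<kappa> = d * sin d / (2 * sqrt (1 + d\<^sup>2))"
  have \<kappa>_pos: "0 < \<kappa>"
    unfolding \<kappa>_def using d_pos d_lt_pi
    by (intro divide_pos_pos mult_pos_pos sin_gt_zero) (auto intro: add_pos_nonneg)
  define c where "c = max 1 (inverse \<kappa>)"
  have inverse_c: "inverse c \<le> \<kappa>"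
    using \<kappa>_pos le_imp_inverse_le[of "inverse \<kappa>" c] by (simp add: c_def)
  have bounds: "inverse c * (Min (side_lengths xi eta) * Max (side_lengths xi eta)) \<le> norm (sigma_bar xi eta)
      \<and> norm (sigma_bar xi eta) \<le> c * (Min (side_lengths xi eta) * Max (side_lengths xi eta))"
    if nondegenerate: "(\<exists>\<theta>\<in>corner_angles xi eta. d \<le> \<theta> \<and> \<theta> \<le> pi - d) \<and> (\<exists>z\<in>{xi, xi - eta, eta}. d \<le> \<bar>Lam z\<bar>)"
    for xi eta :: "real^3"
  proof
    let ?mM = "Min (side_lengths xi eta) * Max (side_lengths xi eta)"
    obtain \<theta> z where \<theta>: "\<theta> \<in> corner_angles xi eta" "d \<le> \<theta>" "\<theta> \<le> pi - d"
      and z: "z \<in> {xi, xi - eta, eta}" "d \<le> \<bar>Lam z\<bar>"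
      using nondegenerate by blast
    have mM_nonneg: "0 \<le> ?mM"
      by (intro mult_nonneg_nonneg) (simp_all add: side_lengths_def le_max_iff_disj)
    have "inverse c * ?mM \<le> \<kappa> * ?mM"
      using inverse_c mM_nonneg by (rule mult_right_mono)
    also have "\<dots> \<le> norm (sigma_bar xi eta)"
      using Min_mult_Max_le_norm_sigma_bar[OF d_pos \<theta> z] by (simp add: \<kappa>_def)
    finally show "inverse c * ?mM \<le> norm (sigma_bar xi eta)" .
    show "norm (sigma_bar xi eta) \<le> c * ?mM"
      using norm_sigma_bar_le_Min_mult_Max[of xi eta] mult_right_mono[OF _ mM_nonneg, of 1 c]
      by (simp add: c_def)
  qed
  have "0 < c"
    by (simp add: c_def)
  with bounds show ?thesis
    unfolding d_def by (auto simp: Let_def side_lengths_def)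
qed

end
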